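(* Let $q_1^2(x),q_2^2(x)$ be positive piecewise-constant functions on $[0,1]$ with finitely many discontinuity points, and set $a_j(x):=q_j^{-2}(x)$, $j=1,2$. For $k\ge 0$ let $\psi_j(x,k)$ be the solution of $$-\psi_j''(x,k)+k^2q_j^2(x)\psi_j(x,k)=0,\quad 0\le x\le 1,\qquad \psi_j'(0,k)=0,\quad \psi_j(0,k)=1,$$ and for $\lambda\ge 0$ let $v_j(x,\lambda)$ be a nontrivial solution of $$\lambda v_j-(a_j(x)v_j')'=0,\quad 0\le x\le 1,\qquad v_j(0,\lambda)=0$$ (primes denote $d/dx$). Then the sets $\{\psi_1(x,k)\psi_2(x,k)\}_{k\ge 0}$ and $\{v_1'(x,\lambda)v_2'(x,\lambda)\}_{\lambda\ge 0}$ are dense in the set $\Pi$ of piecewise-constant functions on $[0,1]$ (with finitely many discontinuity points), in the following sense: if $h\in\Pi$ and $\int_0^1 h(x)\psi_1(x,k)\psi_2(x,k)\,dx=0$ for all $k>0$, then $h=0$; and if $h\in\Pi$ and $\int_0^1 h(x)v_1'(x,\lambda)v_2'(x,\lambda)\,dx=0$ for all $\lambda>0$, then $h=0$.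
   Context: $\Pi$ denotes the set of piecewise-constant functions on $[0,1]$ with finitely many discontinuity points. The solutions of the differential equations with piecewise-constant coefficients are understood in the usual sense for such equations (e.g. $\psi_j$ is the solution of the integral equation $\psi_j(x,k)=1+k^2\int_0^x(x-s)q_j^2(s)\psi_j(s,k)\,ds$, and $a_jv_j'$ is continuous). The property stated (completeness of products of solutions) is called Property C of the pair of operators $\ell_j=-\frac{d^2}{dx^2}+k^2q_j^2(x)$, resp. $L_ju=-[a_j(x)u']'+\lambda u$. *)

theory Defs
  imports "HOL-Analysis.Analysis"
begin

definition piecewise_const :: "(real \<Rightarrow> real) \<Rightarrow> bool" where
  "piecewise_const f \<longleftrightarrow>
     (\<exists>S. finite S \<and>
        (\<forall>x y. 0 \<le> x \<and> x \<le> y \<and> y \<le> 1 \<and> {x..y} \<inter> S = {} \<longrightarrow> f x = f y))"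

end

theory Submission
  imports Defs
begin

text \<open>
  Both families of products have the form \<Phi>_K, K > 0, with \<Phi>_K continuous, positive and
  growing quadratically: wherever q1^2 and q2^2 are at least m on [a, b],
  \<Phi>_K(b) \<ge> \<Phi>_K(a) (1 + K m (b - a)^2 / 2). For \<psi>_j this follows from the Volterra
  equation with kernel x - s; for v_j one uses the quasi-derivative w_j = a_j v_j' normalised by
  w_j(0), which is nonzero by Gronwall's inequality, together with the weight h q1^2 q2^2 in place
  of h.

  Let h be piecewise constant, orthogonal to every \<Phi>_K and not zero almost everywhere. Take the
  rightmost interval (x1, x0) on which h is a constant c \<noteq> 0, so that h vanishes beyond x0, and
  cut it into four equal parts at A < M < R. Over [A, 1] the integral of c h \<Phi>_K is at least
  c^2 (R - M) \<Phi>_K(M), while over [0, A] its absolute value is at most |c| sup |h| \<Phi>_K(A).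
  Since \<Phi>_K(M) / \<Phi>_K(A) grows linearly in K, the two parts cannot cancel for large K.
\<close>

lemma piecewise_constE:
  assumes "piecewise_const f"
  obtains S where "finite S"
    and "\<And>a b x y. 0 \<le> a \<Longrightarrow> b \<le> 1 \<Longrightarrow> {a<..<b} \<inter> S = {} \<Longrightarrow>
           x \<in> {a<..<b} \<Longrightarrow> y \<in> {a<..<b} \<Longrightarrow> f x = f y"
proof -
  obtain S where S: "finite S"
    and const: "\<And>x y. 0 \<le> x \<Longrightarrow> x \<le> y \<Longrightarrow> y \<le> 1 \<Longrightarrow> {x..y} \<inter> S = {} \<Longrightarrow> f x = f y"
    using assms unfolding piecewise_const_def by blast
  have "f x = f y"
    if "0 \<le> a" "b \<le> 1" "{a<..<b} \<inter> S = {}" "x \<in> {a<..<b}" "y \<in> {a<..<b}" for a b x y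
  proof -
    have "{min x y..max x y} \<subseteq> {a<..<b}" using that by auto
    then have "{min x y..max x y} \<inter> S = {}" using that(3) by blast
    moreover have "0 \<le> min x y" "min x y \<le> max x y" "max x y \<le> 1" using that by auto
    ultimately have "f (min x y) = f (max x y)" using const by blast
    then show ?thesis by (auto simp: min_def max_def split: if_splits)
  qed
  with S show thesis by (rule that)
qed

lemma finite_set_gap:
  fixes T :: "real set"
  assumes "finite T" "0 \<in> T" "1 \<in> T" "y \<in> {0..1}" "y \<notin> T"
  obtains a b where "a \<in> T" "b \<in> T" "0 \<le> a" "a < y" "y < b" "b \<le> 1" "{a<..<b} \<inter> T = {}"
proof -
  define A where "A = {t\<in>T. t < y}"
  define B where "B = {t\<in>T. y < t}"
  have "0 \<in> A" "1 \<in> B" using assms by (auto simp: A_def B_def less_le)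
  moreover have fin: "finite A" "finite B" using assms(1) by (auto simp: A_def B_def)
  ultimately have ab: "Max A \<in> A" "Min B \<in> B" "0 \<le> Max A" "Min B \<le> 1"
    using Max_in[of A] Min_in[of B] Max_ge[of A 0] Min_le[of B 1] by fast+
  have "t \<le> Max A \<or> Min B \<le> t" if "t \<in> T" for t
  proof (cases "t < y")
    case True
    then show ?thesis using that fin by (auto simp: A_def)
  next
    case False
    then have "y < t" using that assms(5) by (cases "t = y") auto
    then show ?thesis using that fin by (auto simp: B_def)
  qed
  then have "{Max A<..<Min B} \<inter> T = {}" by (auto simp: not_less[symmetric])
  with ab show thesis by (intro that) (auto simp: A_def B_def)
qed

lemma piecewise_const_bounded:
  assumes "piecewise_const f"
  obtains B where "\<forall>x\<in>{0..1}. \<bar>f x\<bar> \<le> B"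
proof -
  obtain S where S: "finite S"
    and const: "\<And>a b x y. 0 \<le> a \<Longrightarrow> b \<le> 1 \<Longrightarrow> {a<..<b} \<inter> S = {} \<Longrightarrow>
                  x \<in> {a<..<b} \<Longrightarrow> y \<in> {a<..<b} \<Longrightarrow> f x = f y"
    using piecewise_constE[OF assms] by blast
  define T where "T = S \<union> {0, 1}"
  define M where "M = T \<union> (\<lambda>(a, b). (a + b) / 2) ` (T \<times> T)"
  have T: "finite T" "0 \<in> T" "1 \<in> T" using S by (auto simp: T_def)
  have "f x \<in> f ` M" if x01: "x \<in> {0..1}" for x
  proof (cases "x \<in> T")
    case False
    obtain a b where ab: "a \<in> T" "b \<in> T" "0 \<le> a" "a < x" "x < b" "b \<le> 1" "{a<..<b} \<inter> T = {}"
      using finite_set_gap[OF T x01 False] by blast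
    then have "{a<..<b} \<inter> S = {}" by (auto simp: T_def)
    then have "f x = f ((a + b) / 2)" using const[of a b x "(a + b) / 2"] ab by auto
    moreover have "(a + b) / 2 \<in> M" using ab by (force simp: M_def)
    ultimately show ?thesis by blast
  qed (simp add: M_def)
  moreover have "finite M" using T(1) by (simp add: M_def)
  ultimately have "\<bar>f x\<bar> \<le> Max (abs ` f ` M)" if "x \<in> {0..1}" for x
    using that by (intro Max_ge) auto
  then show thesis using that by blast
qed

lemma piecewise_const_compose2:
  assumes "piecewise_const f" "piecewise_const g"
  shows "piecewise_const (\<lambda>x. F (f x) (g x))"
proof -
  obtain S S' where "finite S" "finite S'"
    and f: "\<forall>x y. 0 \<le> x \<and> x \<le> y \<and> y \<le> 1 \<and> {x..y} \<inter> S = {} \<longrightarrow> f x = f y"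
    and g: "\<forall>x y. 0 \<le> x \<and> x \<le> y \<and> y \<le> 1 \<and> {x..y} \<inter> S' = {} \<longrightarrow> g x = g y"
    using assms unfolding piecewise_const_def by blast
  show ?thesis unfolding piecewise_const_def
  proof (intro exI[of _ "S \<union> S'"] conjI allI impI)
    fix x y :: real
    assume "0 \<le> x \<and> x \<le> y \<and> y \<le> 1 \<and> {x..y} \<inter> (S \<union> S') = {}"
    then have "f x = f y" "g x = g y"
      using f[rule_format, of x y] g[rule_format, of x y] by (auto simp: Int_Un_distrib)
    then show "F (f x) (g x) = F (f y) (g y)" by simp
  qed (use \<open>finite S\<close> \<open>finite S'\<close> in simp)
qed

lemma piecewise_const_times_continuous_integrable:
  fixes f g :: "real \<Rightarrow> real"
  assumes "piecewise_const f" "continuous_on {0..1} g" "0 \<le> a" "b \<le> 1"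
  shows "(\<lambda>x. f x * g x) integrable_on {a..b}"
proof -
  obtain S where S: "finite S"
    and const: "\<And>a b x y. 0 \<le> a \<Longrightarrow> b \<le> 1 \<Longrightarrow> {a<..<b} \<inter> S = {} \<Longrightarrow>
                  x \<in> {a<..<b} \<Longrightarrow> y \<in> {a<..<b} \<Longrightarrow> f x = f y"
    using piecewise_constE[OF assms(1)] by blast
  have "(\<lambda>x. f x * g x) integrable_on {a..b}"
    if "card (S \<inter> {a<..<b}) = n" "0 \<le> a" "b \<le> 1" for n a b
    using that
  proof (induction n arbitrary: a b rule: less_induct)
    case (less n)
    show ?case
    proof (cases "S \<inter> {a<..<b} = {}")
      case True
      have "continuous_on {a..b} g"
        using assms(2) by (rule continuous_on_subset) (use less.prems in auto)
      then have int: "(\<lambda>x. f ((a + b) / 2) * g x) integrable_on {a..b}"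
        by (intro integrable_continuous_real continuous_intros)
      have eq: "f x * g x = f ((a + b) / 2) * g x" if "x \<in> {a..b} - {a, b}" for x
        using const[of a b x "(a + b) / 2"] True less.prems that by auto
      show ?thesis by (rule integrable_spike_finite[of "{a, b}", OF _ eq int]) simp
    next
      case False
      then obtain t where t: "t \<in> S" "a < t" "t < b" by auto
      have "S \<inter> {a<..<t} \<subset> S \<inter> {a<..<b}" "S \<inter> {t<..<b} \<subset> S \<inter> {a<..<b}"
        using t by auto
      then have "card (S \<inter> {a<..<t}) < n" "card (S \<inter> {t<..<b}) < n"
        using less.prems(1) S by (metis finite_Int psubset_card_mono)+
      then show ?thesis
        using less.IH less.prems(2,3) t by (intro Henstock_Kurzweil_Integration.integrable_combine[of a t b]) simp_all
    qed
  qed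
  then show ?thesis using assms(3,4) by blast
qed

text \<open>
  For constant p = m the model solution is cosh (sqrt (K m) x), whose ratio over [a, b] is at least
  cosh (sqrt (K m) (b - a)) \<ge> 1 + K m (b - a)^2 / 2.
\<close>
definition quadratic_growth :: "(real \<Rightarrow> real) \<Rightarrow> real \<Rightarrow> (real \<Rightarrow> real) \<Rightarrow> bool" where
  "quadratic_growth p K \<phi> \<longleftrightarrow> continuous_on {0..1} \<phi> \<and> (\<forall>x\<in>{0..1}. 0 < \<phi> x) \<and>
     (\<forall>a b m. 0 \<le> a \<longrightarrow> a \<le> b \<longrightarrow> b \<le> 1 \<longrightarrow> 0 \<le> m \<longrightarrow> (\<forall>s\<in>{a..b}. m \<le> p s) \<longrightarrow>
        \<phi> a * (1 + K * m * (b - a)^2 / 2) \<le> \<phi> b)"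

lemma quadratic_growthD:
  assumes "quadratic_growth p K \<phi>"
  shows "continuous_on {0..1} \<phi>"
    and "x \<in> {0..1} \<Longrightarrow> 0 < \<phi> x"
    and "0 \<le> a \<Longrightarrow> a \<le> b \<Longrightarrow> b \<le> 1 \<Longrightarrow> 0 \<le> m \<Longrightarrow> \<forall>s\<in>{a..b}. m \<le> p s \<Longrightarrow>
           \<phi> a * (1 + K * m * (b - a)^2 / 2) \<le> \<phi> b"
  using assms unfolding quadratic_growth_def by blast+

lemma quadratic_growth_mono:
  assumes "quadratic_growth p K \<phi>" "\<forall>x\<in>{0..1}. 0 \<le> p x" "0 \<le> x" "x \<le> y" "y \<le> 1"
  shows "\<phi> x \<le> \<phi> y"
  using quadratic_growthD(3)[OF assms(1), of x y 0] assms(2-5) by simp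

lemma quadratic_growth_mult_min:
  assumes f: "quadratic_growth p K f" and g: "quadratic_growth p' K g" and "0 \<le> K"
  shows "quadratic_growth (\<lambda>x. min (p x) (p' x)) K (\<lambda>x. f x * g x)"
proof -
  have "f a * g a * (1 + K * m * (b - a)^2 / 2) \<le> f b * g b"
    if ab: "0 \<le> a" "a \<le> b" "b \<le> 1" "0 \<le> m" "\<forall>s\<in>{a..b}. m \<le> min (p s) (p' s)" for a b m
  proof -
    define t where "t = 1 + K * m * (b - a)^2 / 2"
    have "1 \<le> t" using ab \<open>0 \<le> K\<close> by (simp add: t_def)
    have "f a * t \<le> f b" "g a * t \<le> g b"
      using quadratic_growthD(3)[OF f, of a b m] quadratic_growthD(3)[OF g, of a b m] ab
      by (simp_all add: t_def)
    moreover have "0 < f a" and "0 < g a"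
      using quadratic_growthD(2)[OF f] quadratic_growthD(2)[OF g] ab by simp_all
    moreover have "g a \<le> g a * t" "0 < f a * t" using \<open>1 \<le> t\<close> \<open>0 < f a\<close> \<open>0 < g a\<close> by simp_all
    ultimately have "g a \<le> g b" "0 \<le> f b" by linarith+
    then have "(f a * t) * g a \<le> f b * g b"
      using \<open>f a * t \<le> f b\<close> \<open>0 < g a\<close> by (intro mult_mono) auto
    then show ?thesis by (simp add: t_def ac_simps)
  qed
  moreover have "continuous_on {0..1} (\<lambda>x. f x * g x)"
    using quadratic_growthD(1)[OF f] quadratic_growthD(1)[OF g] by (intro continuous_intros)
  ultimately show ?thesis
    using quadratic_growthD(2)[OF f] quadratic_growthD(2)[OF g] unfolding quadratic_growth_def
    by simp
qed

lemma positive_by_continuous_induction: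
  fixes \<phi> :: "real \<Rightarrow> real"
  assumes cont: "continuous_on {0..1} \<phi>"
    and step: "\<And>t. t \<in> {0..1} \<Longrightarrow> \<forall>s\<in>{0..<t}. 0 < \<phi> s \<Longrightarrow> 0 < \<phi> t"
  shows "\<forall>x\<in>{0..1}. 0 < \<phi> x"
proof (rule ccontr)
  define Z where "Z = {0..1} \<inter> \<phi> -` {..0}"
  assume "\<not> (\<forall>x\<in>{0..1}. 0 < \<phi> x)"
  then have "Z \<noteq> {}" by (auto simp: Z_def not_less)
  moreover have "bdd_below Z" by (auto simp: Z_def bdd_below_def)
  moreover have "closed Z"
    unfolding Z_def by (rule continuous_closed_preimage[OF cont]) auto
  ultimately have "Inf Z \<in> Z" by (rule closed_contains_Inf)
  moreover have "0 < \<phi> s" if "s \<in> {0..<Inf Z}" for s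
  proof (rule ccontr)
    assume "\<not> 0 < \<phi> s"
    with that \<open>Inf Z \<in> Z\<close> have "s \<in> Z" by (auto simp: Z_def)
    then have "Inf Z \<le> s" using \<open>bdd_below Z\<close> by (rule cInf_lower)
    with that show False by simp
  qed
  ultimately show False using step[of "Inf Z"] by (auto simp: Z_def)
qed

lemma integral_nonneg_except_finite:
  fixes f :: "'a::euclidean_space \<Rightarrow> real"
  assumes "finite F" "f integrable_on S" "\<And>x. x \<in> S - F \<Longrightarrow> 0 \<le> f x"
  shows "0 \<le> integral S f"
proof -
  define g where "g = (\<lambda>x. if x \<in> F then 0 else f x)"
  have "integral S f = integral S g"
    by (rule integral_spike[OF negligible_finite[OF assms(1)]]) (auto simp: g_def)
  moreover have "g integrable_on S"
    by (rule integrable_spike_finite[OF assms(1) _ assms(2)]) (auto simp: g_def)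
  ultimately show ?thesis
    using assms(3) by (auto simp: g_def intro: integral_nonneg)
qed

lemma has_integral_ramp:
  fixes a b :: real
  assumes "a \<le> b"
  shows "((\<lambda>s. b - s) has_integral (b - a)^2 / 2) {a..b}"
    and "((\<lambda>s. s - a) has_integral (b - a)^2 / 2) {a..b}"
proof -
  define F G where "F s = (s - b) * (b - s) / 2" and "G s = (s - a)^2 / 2" for s :: real
  have "((\<lambda>s. b - s) has_integral (F b - F a)) {a..b}"
    unfolding F_def by (rule fundamental_theorem_of_calculus[OF assms])
      (auto intro!: derivative_eq_intros simp: has_real_derivative_iff_has_vector_derivative[symmetric])
  moreover have "((\<lambda>s. s - a) has_integral (G b - G a)) {a..b}"
    unfolding G_def by (rule fundamental_theorem_of_calculus[OF assms])
      (auto intro!: derivative_eq_intros simp: has_real_derivative_iff_has_vector_derivative[symmetric])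
  moreover have "F b - F a = (b - a)^2 / 2" "G b - G a = (b - a)^2 / 2"
    by (simp_all add: F_def G_def power2_eq_square field_simps)
  ultimately show "((\<lambda>s. b - s) has_integral (b - a)^2 / 2) {a..b}"
    and "((\<lambda>s. s - a) has_integral (b - a)^2 / 2) {a..b}"
    by simp_all
qed

locale volterra_kernel =
  fixes p \<phi> :: "real \<Rightarrow> real" and K :: real
  assumes pc: "piecewise_const p" and p_nonneg: "\<forall>x\<in>{0..1}. 0 \<le> p x"
    and cont: "continuous_on {0..1} \<phi>" and K_nonneg: "0 \<le> K"
    and eq: "\<forall>x\<in>{0..1}. \<phi> x = 1 + K * integral {0..x} (\<lambda>s. (x - s) * p s * \<phi> s)"
begin

lemma integrable: "(\<lambda>s. (x - s) * p s * \<phi> s) integrable_on {u..v}" if "0 \<le> u" "v \<le> 1"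
proof -
  have "continuous_on {0..1} (\<lambda>s. (x - s) * \<phi> s)" using cont by (intro continuous_intros)
  from piecewise_const_times_continuous_integrable[OF pc this that] show ?thesis
    by (simp add: ac_simps)
qed

lemma positive: "\<forall>x\<in>{0..1}. 0 < \<phi> x"
proof (rule positive_by_continuous_induction[OF cont])
  fix t :: real
  assume t: "t \<in> {0..1}" and below: "\<forall>s\<in>{0..<t}. 0 < \<phi> s"
  have "0 \<le> integral {0..t} (\<lambda>s. (t - s) * p s * \<phi> s)"
  proof (rule integral_nonneg_except_finite[of "{t}"])
    show "(\<lambda>s. (t - s) * p s * \<phi> s) integrable_on {0..t}" using integrable t by simp
    fix s assume "s \<in> {0..t} - {t}"
    then have "0 \<le> t - s" "0 \<le> p s" "0 < \<phi> s" using below p_nonneg t by auto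
    then show "0 \<le> (t - s) * p s * \<phi> s" by simp
  qed simp
  then have "0 \<le> K * integral {0..t} (\<lambda>s. (t - s) * p s * \<phi> s)" using K_nonneg by simp
  then show "0 < \<phi> t" using eq t by auto
qed

lemma weight_nonneg: "0 \<le> p s * \<phi> s" if "s \<in> {0..1}"
  using positive p_nonneg that by (simp add: less_imp_le)

lemma increment:
  assumes xy: "0 \<le> x" "x \<le> y" "y \<le> 1"
  shows "K * integral {x..y} (\<lambda>s. (y - s) * p s * \<phi> s) \<le> \<phi> y - \<phi> x"
proof -
  let ?I = "\<lambda>z a b. integral {a..b} (\<lambda>s. (z - s) * p s * \<phi> s)"
  have "(x - s) * p s * \<phi> s \<le> (y - s) * p s * \<phi> s" if "s \<in> {0..x}" for s
    using mult_right_mono[OF _ weight_nonneg, of "x - s" "y - s" s] xy that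
    by (simp add: mult.assoc)
  then have "?I x 0 x \<le> ?I y 0 x"
    using integrable xy by (intro integral_le) auto
  then have "K * ?I x 0 x \<le> K * ?I y 0 x" using K_nonneg by (rule mult_left_mono)
  moreover have "?I y 0 y = ?I y 0 x + ?I y x y"
    using Henstock_Kurzweil_Integration.integral_combine[OF xy(1,2) integrable[of 0 y y]] xy
    by simp
  moreover have "\<phi> y = 1 + K * ?I y 0 y" "\<phi> x = 1 + K * ?I x 0 x" using eq xy by auto
  ultimately show ?thesis by (simp add: distrib_left)
qed

lemma mono: "\<phi> x \<le> \<phi> y" if xy: "0 \<le> x" "x \<le> y" "y \<le> 1"
proof -
  have "0 \<le> integral {x..y} (\<lambda>s. (y - s) * p s * \<phi> s)"
    using integrable xy weight_nonneg by (intro integral_nonneg) (auto simp: mult.assoc)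
  then have "0 \<le> K * integral {x..y} (\<lambda>s. (y - s) * p s * \<phi> s)" using K_nonneg by simp
  then show ?thesis using increment[OF xy] by linarith
qed

theorem solution_quadratic_growth: "quadratic_growth p K \<phi>"
proof -
  have "\<phi> a * (1 + K * m * (b - a)^2 / 2) \<le> \<phi> b"
    if ab: "0 \<le> a" "a \<le> b" "b \<le> 1" "0 \<le> m" "\<forall>s\<in>{a..b}. m \<le> p s" for a b m
  proof -
    have lower: "(b - s) * (m * \<phi> a) \<le> (b - s) * p s * \<phi> s" if s: "s \<in> {a..b}" for s
    proof -
      have "m \<le> p s" "\<phi> a \<le> \<phi> s" "0 \<le> p s" "0 < \<phi> a"
        using ab s mono[of a s] positive p_nonneg by auto
      then have "m * \<phi> a \<le> p s * \<phi> s" by (intro mult_mono) auto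
      then show ?thesis using s by (simp add: mult.assoc mult_left_mono)
    qed
    have ramp: "((\<lambda>s. (b - s) * (m * \<phi> a)) has_integral (b - a)^2 / 2 * (m * \<phi> a)) {a..b}"
      using has_integral_ramp(1)[OF ab(2)] by (rule has_integral_mult_left)
    have "(b - a)^2 / 2 * (m * \<phi> a) \<le> integral {a..b} (\<lambda>s. (b - s) * p s * \<phi> s)"
      using has_integral_le[OF ramp integrable_integral[OF integrable[of a b b]] lower] ab by simp
    then have "K * ((b - a)^2 / 2 * (m * \<phi> a)) \<le> K * integral {a..b} (\<lambda>s. (b - s) * p s * \<phi> s)"
      using K_nonneg by (rule mult_left_mono)
    then have "K * ((b - a)^2 / 2 * (m * \<phi> a)) \<le> \<phi> b - \<phi> a"
      using increment[OF ab(1-3)] by linarith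
    then show ?thesis by (simp add: algebra_simps)
  qed
  then show ?thesis
    unfolding quadratic_growth_def using cont positive by blast
qed

end

locale volterra_system =
  fixes p W V :: "real \<Rightarrow> real" and l :: real
  assumes pc: "piecewise_const p" and p_nonneg: "\<forall>x\<in>{0..1}. 0 \<le> p x"
    and contW: "continuous_on {0..1} W" and contV: "continuous_on {0..1} V" and l_nonneg: "0 \<le> l"
    and eqV: "\<forall>x\<in>{0..1}. V x = integral {0..x} (\<lambda>s. p s * W s)"
    and eqW: "\<forall>x\<in>{0..1}. W x = 1 + l * integral {0..x} V"
begin

lemma integrable_W: "(\<lambda>s. p s * W s) integrable_on {u..v}" if "0 \<le> u" "v \<le> 1"
  using piecewise_const_times_continuous_integrable[OF pc contW that] .

lemma integrable_V: "V integrable_on {u..v}" if "0 \<le> u" "v \<le> 1"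
  by (rule integrable_continuous_real, rule continuous_on_subset[OF contV]) (use that in auto)

lemma increment_V: "V y - V x = integral {x..y} (\<lambda>s. p s * W s)" if "0 \<le> x" "x \<le> y" "y \<le> 1"
  using Henstock_Kurzweil_Integration.integral_combine[OF that(1,2) integrable_W[of 0 y]] that eqV
  by auto

lemma increment_W: "W y - W x = l * integral {x..y} V" if xy: "0 \<le> x" "x \<le> y" "y \<le> 1"
proof -
  have "integral {0..y} V = integral {0..x} V + integral {x..y} V"
    using Henstock_Kurzweil_Integration.integral_combine[OF xy(1,2) integrable_V[of 0 y]] xy by simp
  moreover have "W y = 1 + l * integral {0..y} V" "W x = 1 + l * integral {0..x} V"
    using eqW xy by auto
  ultimately show ?thesis by (simp add: distrib_left)
qed

lemma V_nonneg_if_W_positive_before: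
  assumes s: "s \<in> {0..1}" and below: "\<forall>r\<in>{0..<s}. 0 < W r"
  shows "0 \<le> V s"
proof -
  have "0 \<le> integral {0..s} (\<lambda>r. p r * W r)"
  proof (rule integral_nonneg_except_finite[of "{s}"])
    fix r assume "r \<in> {0..s} - {s}"
    then have "0 \<le> p r" "0 < W r" using below p_nonneg s by auto
    then show "0 \<le> p r * W r" by simp
  qed (use integrable_W s in auto)
  with eqV s show ?thesis by simp
qed

lemma positive: "\<forall>x\<in>{0..1}. 0 < W x"
proof (rule positive_by_continuous_induction[OF contW])
  fix t :: real
  assume t: "t \<in> {0..1}" and below: "\<forall>s\<in>{0..<t}. 0 < W s"
  have "0 \<le> integral {0..t} V"
    by (rule integral_nonneg_except_finite[of "{t}"])
       (use integrable_V t below V_nonneg_if_W_positive_before in auto)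
  then have "0 \<le> l * integral {0..t} V" using l_nonneg by simp
  then show "0 < W t" using eqW t by auto
qed

lemma V_nonneg: "0 \<le> V x" if "x \<in> {0..1}"
  using V_nonneg_if_W_positive_before positive that by auto

lemma mono: "W x \<le> W y" if xy: "0 \<le> x" "x \<le> y" "y \<le> 1"
proof -
  have "0 \<le> integral {x..y} V"
    using integrable_V xy V_nonneg by (intro integral_nonneg) auto
  then have "0 \<le> l * integral {x..y} V" using l_nonneg by simp
  then show ?thesis using increment_W[OF xy] by linarith
qed

lemma V_lower_bound:
  assumes ab: "0 \<le> a" "a \<le> s" "s \<le> 1" "0 \<le> m" "\<forall>r\<in>{a..s}. m \<le> p r"
  shows "(s - a) * (m * W a) \<le> V s"
proof -
  have "m * W a \<le> p r * W r" if r: "r \<in> {a..s}" for r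
  proof -
    have "m \<le> p r" "W a \<le> W r" "0 \<le> p r" "0 < W a"
      using ab r mono[of a r] positive p_nonneg by auto
    then show ?thesis by (intro mult_mono) auto
  qed
  then have "(s - a) * (m * W a) \<le> integral {a..s} (\<lambda>r. p r * W r)"
    using has_integral_le[OF has_integral_const_real integrable_integral[OF integrable_W[of a s]]] ab
    by auto
  moreover have "0 \<le> V a" using V_nonneg ab by auto
  ultimately show ?thesis using increment_V[of a s] ab by auto
qed

theorem solution_quadratic_growth: "quadratic_growth p l W"
proof -
  have "W a * (1 + l * m * (b - a)^2 / 2) \<le> W b"
    if ab: "0 \<le> a" "a \<le> b" "b \<le> 1" "0 \<le> m" "\<forall>s\<in>{a..b}. m \<le> p s" for a b m
  proof -
    have ramp: "((\<lambda>s. (s - a) * (m * W a)) has_integral (b - a)^2 / 2 * (m * W a)) {a..b}"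
      using has_integral_ramp(2)[OF ab(2)] by (rule has_integral_mult_left)
    have "(s - a) * (m * W a) \<le> V s" if "s \<in> {a..b}" for s
      using V_lower_bound[of a s m] ab that by auto
    then have "(b - a)^2 / 2 * (m * W a) \<le> integral {a..b} V"
      using has_integral_le[OF ramp integrable_integral[OF integrable_V[of a b]]] ab by simp
    then have "l * ((b - a)^2 / 2 * (m * W a)) \<le> l * integral {a..b} V"
      using l_nonneg by (rule mult_left_mono)
    then have "l * ((b - a)^2 / 2 * (m * W a)) \<le> W b - W a"
      using increment_W[OF ab(1-3)] by linarith
    then show ?thesis by (simp add: algebra_simps)
  qed
  then show ?thesis
    unfolding quadratic_growth_def using contW positive by blast
qed

end

lemma gronwall_vanishing:
  fixes u :: "real \<Rightarrow> real"
  assumes cont: "continuous_on {0..1} u" and nonneg: "\<forall>x\<in>{0..1}. 0 \<le> u x"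
    and le: "\<forall>x\<in>{0..1}. u x \<le> C * integral {0..x} u"
  shows "\<forall>x\<in>{0..1}. u x = 0"
proof -
  define U where "U x = integral {0..x} u" for x
  define G where "G x = exp (- C * x) * U x" for x
  have U_nonneg: "0 \<le> U x" if "x \<in> {0..1}" for x
    unfolding U_def using that nonneg
    by (intro integral_nonneg integrable_continuous_real continuous_on_subset[OF cont]) auto
  have U_deriv: "(U has_real_derivative u x) (at x)" if "0 < x" "x < 1" for x
  proof -
    have "(U has_vector_derivative u x) (at x within {0..1})"
      unfolding U_def by (rule integral_has_vector_derivative[OF cont]) (use that in auto)
    moreover have "at x within {0..1} = at x" by (rule at_within_interior) (use that in auto)
    ultimately show ?thesis by (simp add: has_real_derivative_iff_has_vector_derivative)
  qed
  have "continuous_on {0..1} U"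
    unfolding U_def by (rule indefinite_integral_continuous_1[OF integrable_continuous_real[OF cont]])
  then have G_cont: "continuous_on {0..1} G" unfolding G_def by (intro continuous_intros)
  have G_le: "G x \<le> G 0" if x: "x \<in> {0..1}" for x
  proof (rule DERIV_nonpos_imp_decreasing_open[of 0 x G])
    show "continuous_on {0..x} G" by (rule continuous_on_subset[OF G_cont]) (use x in auto)
    fix y assume y: "0 < y" "y < x"
    have "(G has_real_derivative exp (- C * y) * (u y - C * U y)) (at y)"
      unfolding G_def using U_deriv[of y] y x
      by (auto intro!: derivative_eq_intros simp: algebra_simps)
    moreover have "exp (- C * y) * (u y - C * U y) \<le> 0"
      using le y x by (auto simp: U_def mult_nonneg_nonpos)
    ultimately show "\<exists>d. (G has_real_derivative d) (at y) \<and> d \<le> 0" by blast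
  qed (use x in auto)
  have "U x = 0" if "x \<in> {0..1}" for x
  proof -
    have "exp (- C * x) * U x \<le> 0" using G_le[OF that] by (simp add: G_def U_def)
    then have "U x \<le> 0" by (simp add: mult_le_0_iff)
    with U_nonneg[OF that] show ?thesis by simp
  qed
  then show ?thesis using le nonneg by (fastforce simp: U_def)
qed

lemma volterra_system_initial_nonzero:
  fixes p v w :: "real \<Rightarrow> real"
  assumes pc: "piecewise_const p" and cv: "continuous_on {0..1} v" and cw: "continuous_on {0..1} w"
    and nontrivial: "\<exists>x\<in>{0..1}. v x \<noteq> 0"
    and eqv: "\<forall>x\<in>{0..1}. v x = integral {0..x} (\<lambda>s. p s * w s)"
    and eqw: "\<forall>x\<in>{0..1}. w x = w 0 + l * integral {0..x} v"
  shows "w 0 \<noteq> 0"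
proof
  assume "w 0 = 0"
  obtain P where P: "\<forall>x\<in>{0..1}. \<bar>p x\<bar> \<le> P" using piecewise_const_bounded[OF pc] by blast
  have "\<bar>p 0\<bar> \<le> P" using P by simp
  then have "0 \<le> P" by (meson abs_ge_zero order_trans)
  define u where "u x = \<bar>v x\<bar> + \<bar>w x\<bar>" for x
  have cu: "continuous_on {0..1} u" unfolding u_def using cv cw by (intro continuous_intros)
  have int: "f integrable_on {0..x}" if "continuous_on {0..1} f" "x \<in> {0..1}"
    for f :: "real \<Rightarrow> real" and x
    using that by (intro integrable_continuous_real continuous_on_subset[OF that(1)]) auto
  have u_le: "u x \<le> (\<bar>l\<bar> + P) * integral {0..x} u" if x: "x \<in> {0..1}" for x
  proof -
    have "\<bar>integral {0..x} v\<bar> \<le> integral {0..x} u"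
      using integral_norm_bound_integral[OF int[OF cv x] int[OF cu x]] x by (simp add: u_def)
    then have w_le: "\<bar>w x\<bar> \<le> \<bar>l\<bar> * integral {0..x} u"
      using eqw[rule_format, OF x] \<open>w 0 = 0\<close> by (simp add: abs_mult mult_left_mono)
    have pw_le: "norm (p s * w s) \<le> P * u s" if "s \<in> {0..x}" for s
      using P that x \<open>0 \<le> P\<close> by (auto simp: u_def abs_mult intro!: mult_mono)
    have "(\<lambda>s. p s * w s) integrable_on {0..x}"
      using piecewise_const_times_continuous_integrable[OF pc cw, of 0 x] x by simp
    from integral_norm_bound_integral[OF this integrable_on_mult_right[OF int[OF cu x]] pw_le]
    have "\<bar>v x\<bar> \<le> P * integral {0..x} u"
      using eqv[rule_format, OF x] by simp
    with w_le show ?thesis by (simp add: u_def algebra_simps)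
  qed
  have "\<forall>x\<in>{0..1}. u x = 0"
    by (rule gronwall_vanishing[OF cu, of "\<bar>l\<bar> + P"]) (use u_le in \<open>auto simp: u_def\<close>)
  with nontrivial show False by (auto simp: u_def)
qed

lemma quasi_derivative_quadratic_growth:
  fixes q a v w :: "real \<Rightarrow> real"
  assumes pc: "piecewise_const (\<lambda>x. (q x)^2)" and a: "\<forall>x\<in>{0..1}. a x = 1 / (q x)^2"
    and l: "0 \<le> l" and cv: "continuous_on {0..1} v" and cw: "continuous_on {0..1} w"
    and nontrivial: "\<exists>x\<in>{0..1}. v x \<noteq> 0"
    and eq: "\<forall>x\<in>{0..1}. v x = integral {0..x} (\<lambda>s. w s / a s) \<and> w x = w 0 + l * integral {0..x} v"
  shows "w 0 \<noteq> 0" and "quadratic_growth (\<lambda>x. (q x)^2) l (\<lambda>x. w x / w 0)"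
proof -
  \<comment> \<open>no positivity of q is needed: where q vanishes, both sides are 0 since x / 0 = 0\<close>
  have eqv: "\<forall>x\<in>{0..1}. v x = integral {0..x} (\<lambda>s. (q s)^2 * w s)"
  proof
    fix x :: real assume x: "x \<in> {0..1}"
    have "integral {0..x} (\<lambda>s. w s / a s) = integral {0..x} (\<lambda>s. (q s)^2 * w s)"
    proof (rule integral_cong)
      fix s assume "s \<in> {0..x}"
      then have "a s = 1 / (q s)^2" using a x by simp
      then show "w s / a s = (q s)^2 * w s" by simp
    qed
    moreover have "v x = integral {0..x} (\<lambda>s. w s / a s)" using eq x by blast
    ultimately show "v x = integral {0..x} (\<lambda>s. (q s)^2 * w s)" by simp
  qed
  have eqw: "\<forall>x\<in>{0..1}. w x = w 0 + l * integral {0..x} v" using eq by blast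
  show w0: "w 0 \<noteq> 0" using volterra_system_initial_nonzero[OF pc cv cw nontrivial eqv eqw] .
  have eqV: "\<forall>x\<in>{0..1}. v x / w 0 = integral {0..x} (\<lambda>s. (q s)^2 * (w s / w 0))"
  proof
    fix x :: real assume x: "x \<in> {0..1}"
    have "(\<lambda>s. (q s)^2 * (w s / w 0)) = (\<lambda>s. (1 / w 0) * ((q s)^2 * w s))"
      by (simp add: fun_eq_iff)
    then show "v x / w 0 = integral {0..x} (\<lambda>s. (q s)^2 * (w s / w 0))"
      using eqv[rule_format, OF x] by simp
  qed
  have eqW: "\<forall>x\<in>{0..1}. w x / w 0 = 1 + l * integral {0..x} (\<lambda>s. v s / w 0)"
  proof
    fix x :: real assume x: "x \<in> {0..1}"
    have "(\<lambda>s. v s / w 0) = (\<lambda>s. (1 / w 0) * v s)" by (simp add: fun_eq_iff)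
    then show "w x / w 0 = 1 + l * integral {0..x} (\<lambda>s. v s / w 0)"
      using eqw[rule_format, OF x] w0 by (simp add: add_divide_distrib)
  qed
  have contW: "continuous_on {0..1} (\<lambda>x. w x / w 0)"
    and contV: "continuous_on {0..1} (\<lambda>x. v x / w 0)"
    using cw cv w0 by (auto intro!: continuous_intros)
  have "volterra_system (\<lambda>x. (q x)^2) (\<lambda>x. w x / w 0) (\<lambda>x. v x / w 0) l"
    by (rule volterra_system.intro[OF pc _ contW contV l eqV eqW]) simp
  then show "quadratic_growth (\<lambda>x. (q x)^2) l (\<lambda>x. w x / w 0)"
    by (rule volterra_system.solution_quadratic_growth)
qed

lemma piecewise_const_common_partition:
  assumes "piecewise_const f" "piecewise_const g"
  obtains T where "finite T" "0 \<in> T" "1 \<in> T" "T \<subseteq> {0..1}"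
    and "\<And>a b x y. 0 \<le> a \<Longrightarrow> b \<le> 1 \<Longrightarrow> {a<..<b} \<inter> T = {} \<Longrightarrow>
           x \<in> {a<..<b} \<Longrightarrow> y \<in> {a<..<b} \<Longrightarrow> f x = f y \<and> g x = g y"
proof -
  obtain S where S: "finite S"
    and const_f: "\<And>a b x y. 0 \<le> a \<Longrightarrow> b \<le> 1 \<Longrightarrow> {a<..<b} \<inter> S = {} \<Longrightarrow>
                    x \<in> {a<..<b} \<Longrightarrow> y \<in> {a<..<b} \<Longrightarrow> f x = f y"
    using piecewise_constE[OF assms(1)] by blast
  obtain S' where S': "finite S'"
    and const_g: "\<And>a b x y. 0 \<le> a \<Longrightarrow> b \<le> 1 \<Longrightarrow> {a<..<b} \<inter> S' = {} \<Longrightarrow>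
                    x \<in> {a<..<b} \<Longrightarrow> y \<in> {a<..<b} \<Longrightarrow> g x = g y"
    using piecewise_constE[OF assms(2)] by blast
  define T where "T = ((S \<union> S') \<inter> {0..1}) \<union> {0, 1}"
  have "f x = f y \<and> g x = g y"
    if ab: "0 \<le> a" "b \<le> 1" "{a<..<b} \<inter> T = {}" and "x \<in> {a<..<b}" "y \<in> {a<..<b}" for a b x y
  proof -
    have "{a<..<b} \<inter> S = {}" "{a<..<b} \<inter> S' = {}" using ab by (auto simp: T_def)
    then show ?thesis using const_f const_g that by blast
  qed
  moreover have "finite T" "0 \<in> T" "1 \<in> T" "T \<subseteq> {0..1}" using S S' by (auto simp: T_def)
  ultimately show thesis using that by blast
qed

lemma rightmost_nonzero_step:
  fixes h p :: "real \<Rightarrow> real"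
  assumes pch: "piecewise_const h" and pcp: "piecewise_const p"
    and nonzero: "\<not> (\<exists>F. finite F \<and> (\<forall>x\<in>{0..1} - F. h x = 0))"
  obtains F x1 x0 c d where "finite F" "0 \<le> x1" "x1 < x0" "x0 \<le> 1" "c \<noteq> 0"
    and "\<forall>x\<in>{x1<..<x0}. h x = c \<and> p x = d" and "\<forall>x\<in>{x0..1} - F. h x = 0"
proof -
  obtain T where T: "finite T" "0 \<in> T" "1 \<in> T" "T \<subseteq> {0..1}"
    and const: "\<And>a b x y. 0 \<le> a \<Longrightarrow> b \<le> 1 \<Longrightarrow> {a<..<b} \<inter> T = {} \<Longrightarrow>
                  x \<in> {a<..<b} \<Longrightarrow> y \<in> {a<..<b} \<Longrightarrow> h x = h y \<and> p x = p y"
    using piecewise_const_common_partition[OF pch pcp] by blast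
  define G where "G = {t\<in>T. \<forall>x\<in>{t..1} - T. h x = 0}"
  define x0 where "x0 = Min G"
  have "1 \<in> G" using T by (auto simp: G_def)
  moreover have "finite G" using T by (simp add: G_def)
  ultimately have "x0 \<in> G" and x0_min: "\<And>t. t \<in> G \<Longrightarrow> x0 \<le> t"
    unfolding x0_def using Min_in[of G] Min_le[of G] by blast+
  then have "x0 \<in> T" and tail: "\<forall>x\<in>{x0..1} - T. h x = 0" unfolding G_def by blast+
  have "x0 \<noteq> 0"
  proof
    assume "x0 = 0"
    with tail have "\<forall>x\<in>{0..1} - T. h x = 0" by simp
    with nonzero T(1) show False by blast
  qed
  with \<open>x0 \<in> T\<close> T(4) have "0 < x0" "x0 \<le> 1" by (auto simp: subset_iff less_le)
  define x1 where "x1 = Max {t\<in>T. t < x0}"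
  have "{t\<in>T. t < x0} \<noteq> {}" "finite {t\<in>T. t < x0}" using T \<open>0 < x0\<close> by auto
  from Max_in[OF this(2,1)] Max_ge[OF this(2)]
  have x1: "x1 \<in> T" "x1 < x0" "\<And>t. t \<in> T \<Longrightarrow> t < x0 \<Longrightarrow> t \<le> x1"
    unfolding x1_def by simp_all
  have "0 \<le> x1" using x1(1) T(4) by auto
  have "t \<le> x1 \<or> x0 \<le> t" if "t \<in> T" for t using x1(3)[OF that] by linarith
  then have gap: "{x1<..<x0} \<inter> T = {}" by (auto simp: not_less[symmetric])
  define c d where "c = h ((x1 + x0) / 2)" and "d = p ((x1 + x0) / 2)"
  have "(x1 + x0) / 2 \<in> {x1<..<x0}" using x1(2) by simp
  then have on_gap: "\<forall>x\<in>{x1<..<x0}. h x = c \<and> p x = d"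
    unfolding c_def d_def using const[OF \<open>0 \<le> x1\<close> \<open>x0 \<le> 1\<close> gap] by blast
  have "c \<noteq> 0"
  proof
    assume "c = 0"
    have "h x = 0" if "x \<in> {x1..1} - T" for x
    proof (cases "x < x0")
      case True
      with that x1(1) have "x \<in> {x1<..<x0}" by (cases "x = x1") auto
      with on_gap \<open>c = 0\<close> show ?thesis by simp
    qed (use that tail in auto)
    with x1(1) have "x1 \<in> G" by (simp add: G_def)
    with x0_min x1(2) show False by fastforce
  qed
  then show thesis using that T(1) \<open>0 \<le> x1\<close> x1(2) \<open>x0 \<le> 1\<close> on_gap tail by blast
qed

lemma abs_integral_times_monotone_le:
  fixes h \<Phi> :: "real \<Rightarrow> real"
  assumes pch: "piecewise_const h" and B: "\<forall>x\<in>{0..1}. \<bar>h x\<bar> \<le> B"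
    and cont: "continuous_on {0..1} \<Phi>" and pos: "\<forall>x\<in>{0..1}. 0 < \<Phi> x"
    and mono: "\<And>x y. 0 \<le> x \<Longrightarrow> x \<le> y \<Longrightarrow> y \<le> 1 \<Longrightarrow> \<Phi> x \<le> \<Phi> y"
    and A: "0 \<le> A" "A \<le> 1"
  shows "\<bar>integral {0..A} (\<lambda>x. h x * \<Phi> x)\<bar> \<le> B * \<Phi> A"
proof -
  have "\<bar>h 0\<bar> \<le> B" using B by simp
  then have "0 \<le> B" using abs_ge_zero[of "h 0"] by linarith
  moreover have "0 < \<Phi> A" using pos A by simp
  ultimately have BA: "0 \<le> B * \<Phi> A" by simp
  have "norm (h x * \<Phi> x) \<le> B * \<Phi> A" if "x \<in> {0..A} - {}" for x
  proof -
    have "\<bar>h x\<bar> \<le> B" "\<Phi> x \<le> \<Phi> A" "0 < \<Phi> x" using B mono pos that A by auto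
    then show ?thesis by (simp add: abs_mult mult_mono)
  qed
  from has_integral_bound_real[OF BA finite.emptyI
      integrable_integral[OF piecewise_const_times_continuous_integrable[OF pch cont order_refl A(2)]]
      this]
  have "\<bar>integral {0..A} (\<lambda>x. h x * \<Phi> x)\<bar> \<le> B * \<Phi> A * A" using A by simp
  also have "\<dots> \<le> B * \<Phi> A" using BA A by (simp add: mult_left_le)
  finally show ?thesis .
qed

lemma rightmost_step_integral_lower_bound:
  fixes h \<Phi> :: "real \<Rightarrow> real"
  assumes pch: "piecewise_const h" and cont: "continuous_on {0..1} \<Phi>"
    and pos: "\<forall>x\<in>{0..1}. 0 < \<Phi> x"
    and mono: "\<And>x y. 0 \<le> x \<Longrightarrow> x \<le> y \<Longrightarrow> y \<le> 1 \<Longrightarrow> \<Phi> x \<le> \<Phi> y"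
    and pts: "0 \<le> x1" "x1 < A" "A \<le> M" "M \<le> R" "R < x0" "x0 \<le> 1"
    and on_gap: "\<forall>x\<in>{x1<..<x0}. h x = c"
    and "finite F" and tail: "\<forall>x\<in>{x0..1} - F. h x = 0"
  shows "(R - M) * (c^2 * \<Phi> M) \<le> c * integral {A..1} (\<lambda>x. h x * \<Phi> x)"
proof -
  define g where "g x = c * (h x * \<Phi> x)" for x
  have int: "g integrable_on {u..v}" if "0 \<le> u" "v \<le> 1" for u v
    unfolding g_def using piecewise_const_times_continuous_integrable[OF pch cont that]
    by (rule integrable_on_mult_right)
  have nonneg: "0 \<le> integral {u..v} g" if uv: "A \<le> u" "v \<le> 1" for u v
  proof (rule integral_nonneg_except_finite[of "insert x0 F"])
    fix x assume x: "x \<in> {u..v} - insert x0 F"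
    show "0 \<le> g x"
    proof (cases "x < x0")
      case True
      then have "h x = c" "0 < \<Phi> x" using on_gap pos x uv pts by auto
      then show ?thesis by (simp add: g_def mult.assoc[symmetric])
    qed (use x uv tail in \<open>auto simp: g_def\<close>)
  qed (use \<open>finite F\<close> int uv pts in auto)
  have "(R - M) * (c^2 * \<Phi> M) \<le> integral {M..R} g"
  proof (rule has_integral_le[OF _ integrable_integral[OF int]])
    show "((\<lambda>x. c^2 * \<Phi> M) has_integral (R - M) * (c^2 * \<Phi> M)) {M..R}"
      using has_integral_const_real[of "c^2 * \<Phi> M" M R] pts by simp
    fix x assume "x \<in> {M..R}"
    then have "h x = c" "\<Phi> M \<le> \<Phi> x" using on_gap mono pts by auto
    then show "c^2 * \<Phi> M \<le> g x"
      using mult_left_mono[of "\<Phi> M" "\<Phi> x" "c^2"] by (simp add: g_def power2_eq_square mult.assoc)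
  qed (use pts in auto)
  moreover have "integral {A..1} g = integral {A..M} g + integral {M..1} g"
    using Henstock_Kurzweil_Integration.integral_combine[of A M 1 g] int pts by simp
  moreover have "integral {M..1} g = integral {M..R} g + integral {R..1} g"
    using Henstock_Kurzweil_Integration.integral_combine[of M R 1 g] int pts by simp
  moreover have "0 \<le> integral {A..M} g" "0 \<le> integral {R..1} g" using nonneg pts by auto
  moreover have "integral {A..1} g = c * integral {A..1} (\<lambda>x. h x * \<Phi> x)"
    unfolding g_def by simp
  ultimately show ?thesis by linarith
qed

lemma quadratic_growth_orthogonality_bound:
  fixes h p \<Phi> :: "real \<Rightarrow> real"
  assumes growth: "quadratic_growth p K \<Phi>" and p_nonneg: "\<forall>x\<in>{0..1}. 0 \<le> p x"
    and pch: "piecewise_const h" and B: "\<forall>x\<in>{0..1}. \<bar>h x\<bar> \<le> B"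
    and x01: "0 \<le> x1" "x1 < x0" "x0 \<le> 1" and "0 \<le> m"
    and on_gap: "\<forall>x\<in>{x1<..<x0}. h x = c \<and> m \<le> p x"
    and "finite F" and tail: "\<forall>x\<in>{x0..1} - F. h x = 0"
    and orth: "integral {0..1} (\<lambda>x. h x * \<Phi> x) = 0"
  defines "L \<equiv> (x0 - x1) / 4"
  shows "\<bar>c\<bar> * L * (1 + K * m * L^2 / 2) \<le> B"
proof (cases "c = 0")
  case True
  have "\<bar>h 0\<bar> \<le> B" using B by simp
  then show ?thesis using True abs_ge_zero[of "h 0"] by simp
next
  case False
  define A M R where "A = x1 + L" and "M = x1 + 2 * L" and "R = x1 + 3 * L"
  have pts: "0 < L" "x1 < A" "A < M" "M < R" "R < x0" "0 \<le> A" "R \<le> 1" "M - A = L" "R - M = L"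
    using x01 by (simp_all add: L_def A_def M_def R_def field_simps)
  have cont: "continuous_on {0..1} \<Phi>" and pos: "\<forall>x\<in>{0..1}. 0 < \<Phi> x"
    using quadratic_growthD(1,2)[OF growth] by auto
  have mono: "\<Phi> x \<le> \<Phi> y" if "0 \<le> x" "x \<le> y" "y \<le> 1" for x y
    using quadratic_growth_mono[OF growth p_nonneg that] .
  have "integral {0..A} (\<lambda>x. h x * \<Phi> x) + integral {A..1} (\<lambda>x. h x * \<Phi> x) = 0"
    using Henstock_Kurzweil_Integration.integral_combine[of 0 A 1 "\<lambda>x. h x * \<Phi> x"]
      piecewise_const_times_continuous_integrable[OF pch cont, of 0 1] orth pts by simp
  then have sum_zero:
    "c * integral {0..A} (\<lambda>x. h x * \<Phi> x) + c * integral {A..1} (\<lambda>x. h x * \<Phi> x) = 0"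
    by (simp flip: distrib_left)
  have "\<bar>c * integral {0..A} (\<lambda>x. h x * \<Phi> x)\<bar> \<le> \<bar>c\<bar> * (B * \<Phi> A)"
    using abs_integral_times_monotone_le[OF pch B cont pos mono] pts
    by (simp add: abs_mult mult_left_mono)
  moreover have "(R - M) * (c^2 * \<Phi> M) \<le> c * integral {A..1} (\<lambda>x. h x * \<Phi> x)"
    using on_gap \<open>finite F\<close> tail pts x01
    by (intro rightmost_step_integral_lower_bound[OF pch cont pos mono]) auto
  ultimately have "c^2 * L * \<Phi> M \<le> \<bar>c\<bar> * (B * \<Phi> A)"
    using sum_zero pts by (simp add: abs_le_iff ac_simps)
  define t where "t = 1 + K * m * L^2 / 2"
  have "\<Phi> A * t \<le> \<Phi> M"
    using quadratic_growthD(3)[OF growth, of A M m] on_gap pts \<open>0 \<le> m\<close> by (auto simp: t_def)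
  then have "c^2 * L * (\<Phi> A * t) \<le> c^2 * L * \<Phi> M"
    by (rule mult_left_mono) (use pts in simp)
  also have "\<dots> \<le> \<bar>c\<bar> * (B * \<Phi> A)" by fact
  also have "c^2 * L * (\<Phi> A * t) = (\<bar>c\<bar> * \<bar>c\<bar>) * (L * t * \<Phi> A)"
    by (simp add: power2_eq_square ac_simps)
  finally have "\<bar>c\<bar> * (\<bar>c\<bar> * L * t * \<Phi> A) \<le> \<bar>c\<bar> * (B * \<Phi> A)"
    by (simp add: mult.assoc)
  then have "\<bar>c\<bar> * L * t * \<Phi> A \<le> B * \<Phi> A"
    by (rule mult_left_le_imp_le) (use False in simp)
  then have "\<bar>c\<bar> * L * t \<le> B"
    by (rule mult_right_le_imp_le) (use pos pts in simp)
  then show ?thesis by (simp add: t_def)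
qed

lemma orthogonal_to_quadratic_growth_vanishes:
  fixes p h :: "real \<Rightarrow> real" and \<Phi> :: "real \<Rightarrow> real \<Rightarrow> real"
  assumes pcp: "piecewise_const p" and p_pos: "\<forall>x\<in>{0..1}. 0 < p x" and pch: "piecewise_const h"
    and growth: "\<And>K. 0 < K \<Longrightarrow> quadratic_growth p K (\<Phi> K)"
    and orth: "\<And>K. 0 < K \<Longrightarrow> integral {0..1} (\<lambda>x. h x * \<Phi> K x) = 0"
  shows "\<exists>F. finite F \<and> (\<forall>x\<in>{0..1} - F. h x = 0)"
proof (rule ccontr)
  assume "\<not> ?thesis"
  then obtain F x1 x0 c d where "finite F" "0 \<le> x1" "x1 < x0" "x0 \<le> 1" "c \<noteq> 0"
    and on_gap: "\<forall>x\<in>{x1<..<x0}. h x = c \<and> p x = d" and tail: "\<forall>x\<in>{x0..1} - F. h x = 0"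
    using rightmost_nonzero_step[OF pch pcp] by blast
  obtain B where B: "\<forall>x\<in>{0..1}. \<bar>h x\<bar> \<le> B" using piecewise_const_bounded[OF pch] by blast
  have "\<bar>h 0\<bar> \<le> B" using B by simp
  then have "0 \<le> B" using abs_ge_zero[of "h 0"] by linarith
  have "(x1 + x0) / 2 \<in> {x1<..<x0}" using \<open>x1 < x0\<close> by simp
  moreover from this have "(x1 + x0) / 2 \<in> {0..1}" using \<open>0 \<le> x1\<close> \<open>x0 \<le> 1\<close> by simp
  ultimately have "0 < d" using on_gap p_pos by fastforce
  define L where "L = (x0 - x1) / 4"
  define D where "D = \<bar>c\<bar> * d * L^3"
  define K where "K = 2 * B / D + 1"
  have "0 < L" "0 < D" using \<open>x1 < x0\<close> \<open>c \<noteq> 0\<close> \<open>0 < d\<close> by (simp_all add: L_def D_def)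
  then have "0 \<le> 2 * B / D" using \<open>0 \<le> B\<close> by simp
  then have "0 < K" by (simp add: K_def)
  have "\<bar>c\<bar> * L * (1 + K * d * L^2 / 2) \<le> B"
    unfolding L_def
    using on_gap p_pos \<open>0 < d\<close> \<open>finite F\<close> tail orth[OF \<open>0 < K\<close>]
    by (intro quadratic_growth_orthogonality_bound[OF growth[OF \<open>0 < K\<close>] _ pch B \<open>0 \<le> x1\<close>
          \<open>x1 < x0\<close> \<open>x0 \<le> 1\<close>]) (auto simp: less_imp_le)
  moreover have "\<bar>c\<bar> * L * (1 + K * d * L^2 / 2) = \<bar>c\<bar> * L + K * D / 2"
    by (simp add: D_def algebra_simps power3_eq_cube power2_eq_square)
  moreover have "K * D / 2 = B + D / 2" using \<open>0 < D\<close> by (simp add: K_def field_simps)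
  moreover have "0 < \<bar>c\<bar> * L" using \<open>c \<noteq> 0\<close> \<open>0 < L\<close> by simp
  ultimately show False using \<open>0 < D\<close> by linarith
qed

lemma volterra_kernel_products_complete:
  fixes q1 q2 h :: "real \<Rightarrow> real" and \<psi>1 \<psi>2 :: "real \<Rightarrow> real \<Rightarrow> real"
  assumes pc1: "piecewise_const (\<lambda>x. (q1 x)^2)" and pc2: "piecewise_const (\<lambda>x. (q2 x)^2)"
    and pos1: "\<forall>x\<in>{0..1}. (q1 x)^2 > 0" and pos2: "\<forall>x\<in>{0..1}. (q2 x)^2 > 0"
    and psi1: "\<forall>k\<ge>0. continuous_on {0..1} (\<lambda>x. \<psi>1 x k) \<and>
       (\<forall>x\<in>{0..1}. \<psi>1 x k = 1 + k^2 * integral {0..x} (\<lambda>s. (x - s) * (q1 s)^2 * \<psi>1 s k))"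
    and psi2: "\<forall>k\<ge>0. continuous_on {0..1} (\<lambda>x. \<psi>2 x k) \<and>
       (\<forall>x\<in>{0..1}. \<psi>2 x k = 1 + k^2 * integral {0..x} (\<lambda>s. (x - s) * (q2 s)^2 * \<psi>2 s k))"
    and pch: "piecewise_const h"
    and orth: "\<forall>k>0. integral {0..1} (\<lambda>x. h x * \<psi>1 x k * \<psi>2 x k) = 0"
  shows "\<exists>F. finite F \<and> (\<forall>x\<in>{0..1} - F. h x = 0)"
proof (rule orthogonal_to_quadratic_growth_vanishes
    [where p = "\<lambda>x. min ((q1 x)^2) ((q2 x)^2)" and \<Phi> = "\<lambda>K x. \<psi>1 x (sqrt K) * \<psi>2 x (sqrt K)",
     OF piecewise_const_compose2[OF pc1 pc2] _ pch])
  show "\<forall>x\<in>{0..1}. 0 < min ((q1 x)^2) ((q2 x)^2)" using pos1 pos2 by simp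
  fix K :: real
  assume "0 < K"
  then have k: "0 \<le> sqrt K" "(sqrt K)^2 = K" by simp_all
  have "quadratic_growth (\<lambda>x. (q1 x)^2) K (\<lambda>x. \<psi>1 x (sqrt K))"
    using volterra_kernel.solution_quadratic_growth[OF volterra_kernel.intro[OF pc1],
        where \<phi> = "\<lambda>x. \<psi>1 x (sqrt K)" and K = "(sqrt K)^2"] psi1 k by simp
  moreover have "quadratic_growth (\<lambda>x. (q2 x)^2) K (\<lambda>x. \<psi>2 x (sqrt K))"
    using volterra_kernel.solution_quadratic_growth[OF volterra_kernel.intro[OF pc2],
        where \<phi> = "\<lambda>x. \<psi>2 x (sqrt K)" and K = "(sqrt K)^2"] psi2 k by simp
  ultimately show "quadratic_growth (\<lambda>x. min ((q1 x)^2) ((q2 x)^2)) K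
      (\<lambda>x. \<psi>1 x (sqrt K) * \<psi>2 x (sqrt K))"
    using \<open>0 < K\<close> by (intro quadratic_growth_mult_min) auto
  show "integral {0..1} (\<lambda>x. h x * (\<psi>1 x (sqrt K) * \<psi>2 x (sqrt K))) = 0"
    using orth \<open>0 < K\<close> by (simp add: mult.assoc)
qed

lemma quasi_derivative_products_complete:
  fixes q1 q2 a1 a2 h :: "real \<Rightarrow> real" and v1 v2 w1 w2 :: "real \<Rightarrow> real \<Rightarrow> real"
  assumes pc1: "piecewise_const (\<lambda>x. (q1 x)^2)" and pc2: "piecewise_const (\<lambda>x. (q2 x)^2)"
    and pos1: "\<forall>x\<in>{0..1}. (q1 x)^2 > 0" and pos2: "\<forall>x\<in>{0..1}. (q2 x)^2 > 0"
    and a1: "\<forall>x\<in>{0..1}. a1 x = 1 / (q1 x)^2" and a2: "\<forall>x\<in>{0..1}. a2 x = 1 / (q2 x)^2"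
    and v1: "\<forall>l\<ge>0. continuous_on {0..1} (\<lambda>x. v1 x l) \<and> continuous_on {0..1} (\<lambda>x. w1 x l) \<and>
       v1 0 l = 0 \<and> (\<exists>x\<in>{0..1}. v1 x l \<noteq> 0) \<and>
       (\<forall>x\<in>{0..1}. v1 x l = integral {0..x} (\<lambda>s. w1 s l / a1 s) \<and>
                     w1 x l = w1 0 l + l * integral {0..x} (\<lambda>s. v1 s l))"
    and v2: "\<forall>l\<ge>0. continuous_on {0..1} (\<lambda>x. v2 x l) \<and> continuous_on {0..1} (\<lambda>x. w2 x l) \<and>
       v2 0 l = 0 \<and> (\<exists>x\<in>{0..1}. v2 x l \<noteq> 0) \<and>
       (\<forall>x\<in>{0..1}. v2 x l = integral {0..x} (\<lambda>s. w2 s l / a2 s) \<and>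
                     w2 x l = w2 0 l + l * integral {0..x} (\<lambda>s. v2 s l))"
    and pch: "piecewise_const h"
    and orth: "\<forall>l>0. integral {0..1} (\<lambda>x. h x * (w1 x l / a1 x) * (w2 x l / a2 x)) = 0"
  shows "\<exists>F. finite F \<and> (\<forall>x\<in>{0..1} - F. h x = 0)"
proof -
  define h' where "h' x = h x * (q1 x)^2 * (q2 x)^2" for x
  have "piecewise_const h'"
    unfolding h'_def
    using piecewise_const_compose2[OF piecewise_const_compose2[OF pch pc1, where F = "(*)"] pc2,
        where F = "(*)"]
    by simp
  have "\<exists>F. finite F \<and> (\<forall>x\<in>{0..1} - F. h' x = 0)"
  proof (rule orthogonal_to_quadratic_growth_vanishes
      [where p = "\<lambda>x. min ((q1 x)^2) ((q2 x)^2)" and \<Phi> = "\<lambda>l x. w1 x l / w1 0 l * (w2 x l / w2 0 l)",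
       OF piecewise_const_compose2[OF pc1 pc2] _ \<open>piecewise_const h'\<close>])
    show "\<forall>x\<in>{0..1}. 0 < min ((q1 x)^2) ((q2 x)^2)" using pos1 pos2 by simp
    fix l :: real
    assume "0 < l"
    have "0 \<le> l" using \<open>0 < l\<close> by simp
    then have "w1 0 l \<noteq> 0 \<and> quadratic_growth (\<lambda>x. (q1 x)^2) l (\<lambda>x. w1 x l / w1 0 l)"
      and "w2 0 l \<noteq> 0 \<and> quadratic_growth (\<lambda>x. (q2 x)^2) l (\<lambda>x. w2 x l / w2 0 l)"
      using quasi_derivative_quadratic_growth[OF pc1 a1, of l "\<lambda>x. v1 x l" "\<lambda>x. w1 x l"]
        quasi_derivative_quadratic_growth[OF pc2 a2, of l "\<lambda>x. v2 x l" "\<lambda>x. w2 x l"] v1 v2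
      by blast+
    then show "quadratic_growth (\<lambda>x. min ((q1 x)^2) ((q2 x)^2)) l
        (\<lambda>x. w1 x l / w1 0 l * (w2 x l / w2 0 l))"
      using \<open>0 \<le> l\<close> by (intro quadratic_growth_mult_min) auto
    have "integral {0..1} (\<lambda>x. h' x * (w1 x l / w1 0 l * (w2 x l / w2 0 l)))
        = integral {0..1} (\<lambda>x. 1 / (w1 0 l * w2 0 l) * (h x * (w1 x l / a1 x) * (w2 x l / a2 x)))"
      by (rule integral_cong) (use a1 a2 \<open>w1 0 l \<noteq> 0 \<and> _\<close> in \<open>simp add: h'_def\<close>)
    also have "\<dots> = 0"
      unfolding Henstock_Kurzweil_Integration.integral_mult_right using orth \<open>0 < l\<close> by simp
    finally show "integral {0..1} (\<lambda>x. h' x * (w1 x l / w1 0 l * (w2 x l / w2 0 l))) = 0" .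
  qed
  then obtain F where "finite F" and "\<forall>x\<in>{0..1} - F. h' x = 0" by blast
  moreover have "h x = 0" if "x \<in> {0..1}" "h' x = 0" for x
    using pos1 pos2 that by (simp add: h'_def)
  ultimately show ?thesis by blast
qed

theorem theorem2:
  fixes q1 q2 a1 a2 :: "real \<Rightarrow> real"
    and \<psi>1 \<psi>2 :: "real \<Rightarrow> real \<Rightarrow> real"
    and v1 v2 w1 w2 :: "real \<Rightarrow> real \<Rightarrow> real"
  assumes pc1: "piecewise_const (\<lambda>x. (q1 x)^2)"
    and pc2: "piecewise_const (\<lambda>x. (q2 x)^2)"
    and pos1: "\<forall>x\<in>{0..1}. (q1 x)^2 > 0"
    and pos2: "\<forall>x\<in>{0..1}. (q2 x)^2 > 0"
    and a1_def: "\<forall>x\<in>{0..1}. a1 x = 1 / (q1 x)^2"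
    and a2_def: "\<forall>x\<in>{0..1}. a2 x = 1 / (q2 x)^2"
    and psi1: "\<forall>k\<ge>0. continuous_on {0..1} (\<lambda>x. \<psi>1 x k) \<and>
       (\<forall>x\<in>{0..1}. \<psi>1 x k = 1 + k^2 * integral {0..x} (\<lambda>s. (x - s) * (q1 s)^2 * \<psi>1 s k))"
    and psi2: "\<forall>k\<ge>0. continuous_on {0..1} (\<lambda>x. \<psi>2 x k) \<and>
       (\<forall>x\<in>{0..1}. \<psi>2 x k = 1 + k^2 * integral {0..x} (\<lambda>s. (x - s) * (q2 s)^2 * \<psi>2 s k))"
    \<comment> \<open>w_j = a_j v_j' is the continuous quasi-derivative of v_j\<close>
    and v1: "\<forall>l\<ge>0. continuous_on {0..1} (\<lambda>x. v1 x l) \<and> continuous_on {0..1} (\<lambda>x. w1 x l) \<and>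
       v1 0 l = 0 \<and> (\<exists>x\<in>{0..1}. v1 x l \<noteq> 0) \<and>
       (\<forall>x\<in>{0..1}. v1 x l = integral {0..x} (\<lambda>s. w1 s l / a1 s) \<and>
                     w1 x l = w1 0 l + l * integral {0..x} (\<lambda>s. v1 s l))"
    and v2: "\<forall>l\<ge>0. continuous_on {0..1} (\<lambda>x. v2 x l) \<and> continuous_on {0..1} (\<lambda>x. w2 x l) \<and>
       v2 0 l = 0 \<and> (\<exists>x\<in>{0..1}. v2 x l \<noteq> 0) \<and>
       (\<forall>x\<in>{0..1}. v2 x l = integral {0..x} (\<lambda>s. w2 s l / a2 s) \<and>
                     w2 x l = w2 0 l + l * integral {0..x} (\<lambda>s. v2 s l))"
  shows "(\<forall>h. piecewise_const h \<and>
            (\<forall>k>0. integral {0..1} (\<lambda>x. h x * \<psi>1 x k * \<psi>2 x k) = 0)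
          \<longrightarrow> (\<exists>F. finite F \<and> (\<forall>x\<in>{0..1} - F. h x = 0)))
       \<and> (\<forall>h. piecewise_const h \<and>
            (\<forall>l>0. integral {0..1} (\<lambda>x. h x * (w1 x l / a1 x) * (w2 x l / a2 x)) = 0)
          \<longrightarrow> (\<exists>F. finite F \<and> (\<forall>x\<in>{0..1} - F. h x = 0)))"
proof (intro conjI allI impI)
  fix h :: "real \<Rightarrow> real"
  assume "piecewise_const h \<and> (\<forall>k>0. integral {0..1} (\<lambda>x. h x * \<psi>1 x k * \<psi>2 x k) = 0)"
  then show "\<exists>F. finite F \<and> (\<forall>x\<in>{0..1} - F. h x = 0)"
    using volterra_kernel_products_complete[OF pc1 pc2 pos1 pos2 psi1 psi2] by blast
next
  fix h :: "real \<Rightarrow> real"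
  assume "piecewise_const h \<and>
    (\<forall>l>0. integral {0..1} (\<lambda>x. h x * (w1 x l / a1 x) * (w2 x l / a2 x)) = 0)"
  then show "\<exists>F. finite F \<and> (\<forall>x\<in>{0..1} - F. h x = 0)"
    using quasi_derivative_products_complete[OF pc1 pc2 pos1 pos2 a1_def a2_def v1 v2] by blast
qed

end
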